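(* Fix $\alpha\in(1/2,1)$. Then for every $n\ge 0$ and every binary rooted tree $T$ on $n$ nodes, the tree $B_n$ defined below contains a subgraph isomorphic to a subdivision of $T$. Equivalently, there is an injective map $f$ from the nodes of $T$ to the nodes of $B_n$ with $f(\mathsf{NCA}(u,v))=\mathsf{NCA}(f(u),f(v))$ for all $u,v$. Definition of $a_N$: for integers $N\ge 0$, $a_0$ is the empty sequence, $a_1=(1)$, and for $N\ge 2$, $a_N=a_{\lfloor N/2\rfloor}\oplus(N)\oplus a_{\lfloor N/2\rfloor}$, where $\oplus$ denotes concatenation. Definition of $B_n$: $B_0$ is the empty tree and $B_1$ is a single node. For $n\ge 2$, let $N=\lfloor(1-\alpha)n\rfloor$ and $a_N=(a(1),\dots,a(k))$. Then $B_n$ consists of a path $u_1-u_2-\dots-u_{k+1}$ rooted at $u_1$, with the following subtrees attached: - for each $i=1,\dots,k$, a copy of $B_{a(i)-1}$ attached to $u_i$; - a copy of $B_{\lfloor\alpha n\rfloor}$ attached to $u_{k+1}$; - a copy of $B_{\lfloor (n-1)/2\rfloor}$ attached to $u_{k+1}$. Attaching a copy of a tree to a node means making its root a child of that node; attaching the empty tree adds nothing.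
   Context: Trees are rooted and unordered, with edges directed from parent to child. A tree is binary if every node has at most two children. $\mathsf{NCA}$ denotes the nearest common ancestor. *)

theory Defs
  imports Complex_Main "HOL-Library.Sublist"
begin

text \<open>A rooted (unordered) tree is encoded by its set of nodes, each node being the
  position (list of child indices) reached from the root.  The root is the empty list,
  the children of node p are the nodes of the form p @ [i], and the set is closed
  under taking parents.\<close>

definition is_tree :: "nat list set \<Rightarrow> bool" where
  "is_tree T \<longleftrightarrow> finite T \<and> (\<forall>p i. p @ [i] \<in> T \<longrightarrow> p \<in> T)"

definition children :: "nat list set \<Rightarrow> nat list \<Rightarrow> nat list set" where
  "children T p = {q \<in> T. \<exists>i. q = p @ [i]}"

definition is_binary_tree :: "nat list set \<Rightarrow> bool" where
  "is_binary_tree T \<longleftrightarrow> is_tree T \<and> (\<forall>p\<in>T. card (children T p) \<le> 2)"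

text \<open>Ancestors of a node are exactly its prefixes, so the nearest common ancestor
  of two nodes is their longest common prefix.\<close>

definition nca :: "nat list \<Rightarrow> nat list \<Rightarrow> nat list" where
  "nca u v = longest_common_prefix u v"

function aseq :: "nat \<Rightarrow> nat list" where
  "aseq 0 = []"
| "aseq (Suc 0) = [1]"
| "aseq (Suc (Suc m)) =
     aseq (Suc (Suc m) div 2) @ [Suc (Suc m)] @ aseq (Suc (Suc m) div 2)"
  by pat_completeness auto
termination by (relation "measure id") auto

text \<open>Path u_1,...,u_{k+1} is [], [0], [0,0], ...; the copy of B_{a(i)-1} hangs at
  child index 1 of u_i; at u_{k+1} the copies of B_{floor(alpha n)} and
  B_{floor((n-1)/2)} hang at child indices 1 and 2.  Recursive calls are guarded by
  m < n, which always holds for alpha < 1 (so the guard never fires there).\<close>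

function Btree :: "real \<Rightarrow> nat \<Rightarrow> nat list set" where
  "Btree \<alpha> n =
    (if n = 0 then {}
     else if n = 1 then {[]}
     else
       (let N = nat \<lfloor>(1 - \<alpha>) * real n\<rfloor>;
            as = aseq N;
            k = length as;
            B = (\<lambda>m. if m < n then Btree \<alpha> m else {})
        in {replicate i 0 | i. i \<le> k}
           \<union> (\<Union>i<k. (\<lambda>q. replicate i 0 @ 1 # q) ` B (as ! i - 1))
           \<union> (\<lambda>q. replicate k 0 @ 1 # q) ` B (nat \<lfloor>\<alpha> * real n\<rfloor>)
           \<union> (\<lambda>q. replicate k 0 @ 2 # q) ` B ((n - 1) div 2)))"
  by pat_completeness auto
termination by (relation "measure (\<lambda>(\<alpha>, n). n)") auto

end

theory Submission
  imports Defs
begin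

text \<open>T is embedded top-down along heavy paths.  A heavy path of T walks down the spine
  u_1, u_2, ... of B_n; each light subtree, together with the node it hangs from, is a demand
  served by a later spine node u_i whose hanging copy of B_(a(i)-1) is large enough.  Once the
  heavy child has at most floor(alpha n) nodes the path jumps to u_(k+1): the heavy child goes
  into B_(floor(alpha n)) and the light one, having at most (n-1)/2 nodes, into
  B_(floor((n-1)/2)).  The sequence a_N serves any sequence of demands of total at most N, and
  N + floor(alpha n) + 1 >= n, so the spine never runs out.\<close>

lemma nca_Cons [simp]: "nca (x # xs) (y # ys) = (if x = y then x # nca xs ys else [])"
  and nca_Nil1 [simp]: "nca [] ys = []"
  and nca_Nil2 [simp]: "nca xs [] = []"
  unfolding nca_def by (cases xs; simp)+

lemma nca_self [simp]: "nca xs xs = xs"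
  by (induction xs) auto

lemma nca_append_left: "nca (p @ xs) (p @ ys) = p @ nca xs ys"
  by (induction p) auto

definition subtree :: "nat list set \<Rightarrow> nat list \<Rightarrow> nat list set" where
  "subtree S p = {q. p @ q \<in> S}"

lemma subtree_Nil [simp]: "subtree S [] = S"
  and subtree_subtree [simp]: "subtree (subtree S p) q = subtree S (p @ q)"
  by (auto simp: subtree_def)

definition nca_embedding ::
    "nat list set \<Rightarrow> nat list set \<Rightarrow> (nat list \<Rightarrow> nat list) \<Rightarrow> bool" where
  "nca_embedding T S f \<longleftrightarrow>
     inj_on f T \<and> f ` T \<subseteq> S \<and> (\<forall>u\<in>T. \<forall>v\<in>T. f (nca u v) = nca (f u) (f v))"

definition embeds :: "nat list set \<Rightarrow> nat list set \<Rightarrow> bool" where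
  "embeds T S \<longleftrightarrow> (\<exists>f. nca_embedding T S f)"

lemma embeds_empty [simp]: "embeds {} S"
  by (auto simp: embeds_def nca_embedding_def)

lemma embeds_mono: "embeds T S \<Longrightarrow> S \<subseteq> S' \<Longrightarrow> embeds T S'"
  unfolding embeds_def nca_embedding_def by blast

lemma embeds_subtree: "embeds T (subtree S p) \<Longrightarrow> embeds T S"
proof -
  assume "embeds T (subtree S p)"
  then obtain f where "nca_embedding T (subtree S p) f" by (auto simp: embeds_def)
  then have "nca_embedding T S (\<lambda>q. p @ f q)"
    by (auto simp: nca_embedding_def subtree_def inj_on_def nca_append_left)
  then show ?thesis by (auto simp: embeds_def)
qed

lemma nca_embedding_node:
  assumes h: "inj_on h C" and root: "[] \<in> S"
    and children: "\<And>c q. c # q \<in> T \<Longrightarrow> c \<in> C"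
    and g: "\<And>c. c \<in> C \<Longrightarrow> nca_embedding (subtree T [c]) (subtree S [h c]) (g c)"
  shows "nca_embedding T S (\<lambda>u. case u of [] \<Rightarrow> [] | c # q \<Rightarrow> h c # g c q)"
    (is "nca_embedding T S ?f")
proof -
  have gc: "g c q \<in> subtree S [h c]" "inj_on (g c) (subtree T [c])"
    "\<And>x y. c # x \<in> T \<Longrightarrow> c # y \<in> T \<Longrightarrow> g c (nca x y) = nca (g c x) (g c y)"
    if "c # q \<in> T" for c q
    using g[OF children[OF that]] that by (auto simp: nca_embedding_def subtree_def)
  have same: "h a = h b \<longleftrightarrow> a = b" if "a # x \<in> T" "b # y \<in> T" for a b x y
    using h children[OF that(1)] children[OF that(2)] by (auto dest: inj_onD)
  have "inj_on ?f T"
  proof (rule inj_onI)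
    fix u v assume uv: "u \<in> T" "v \<in> T" "?f u = ?f v"
    show "u = v"
    proof (cases u; cases v)
      fix a x b y assume u: "u = a # x" and v: "v = b # y"
      with uv have "a = b" using same by auto
      with uv u v show "u = v" using gc(2)[of a x] by (auto simp: subtree_def dest: inj_onD)
    qed (use uv in auto)
  qed
  moreover have "?f ` T \<subseteq> S"
    using root gc(1) by (auto simp: subtree_def split: list.splits)
  moreover have "?f (nca u v) = nca (?f u) (?f v)" if uv: "u \<in> T" "v \<in> T" for u v
  proof (cases u; cases v)
    fix a x b y assume u: "u = a # x" and v: "v = b # y"
    show ?thesis
    proof (cases "a = b")
      case True
      then show ?thesis using u v uv gc(3)[of a x x y] by simp
    next
      case False
      then show ?thesis using u v uv same by simp
    qed
  qed auto
  ultimately show ?thesis by (auto simp: nca_embedding_def)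
qed

lemma embeds_binary_node:
  assumes "r \<in> S" and "c1 \<noteq> c2" and "d1 \<noteq> d2"
    and "\<And>c q. c # q \<in> T \<Longrightarrow> c \<in> {c1, c2}"
    and "embeds (subtree T [c1]) (subtree S (r @ [d1]))"
    and "embeds (subtree T [c2]) (subtree S (r @ [d2]))"
  shows "embeds T S"
proof -
  define h where "h c = (if c = c1 then d1 else d2)" for c
  have "\<forall>c\<in>{c1, c2}. \<exists>g. nca_embedding (subtree T [c]) (subtree (subtree S r) [h c]) g"
    using assms(2,5,6) by (simp add: h_def embeds_def)
  then obtain g
    where g: "\<forall>c\<in>{c1, c2}. nca_embedding (subtree T [c]) (subtree (subtree S r) [h c]) (g c)"
    by (rule bchoice[THEN exE])
  have h: "inj_on h {c1, c2}" using assms(2,3) by (simp add: h_def)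
  have root: "[] \<in> subtree S r" using assms(1) by (simp add: subtree_def)
  have "nca_embedding T (subtree S r) (\<lambda>u. case u of [] \<Rightarrow> [] | c # q \<Rightarrow> h c # g c q)"
    by (rule nca_embedding_node[OF h root assms(4)]) (use g in auto)
  then have "embeds T (subtree S r)" by (auto simp: embeds_def)
  then show ?thesis by (rule embeds_subtree)
qed

lemma tree_prefix_closed: "is_tree T \<Longrightarrow> p @ q \<in> T \<Longrightarrow> p \<in> T"
proof (induction q rule: rev_induct)
  case (snoc x xs)
  then show ?case unfolding is_tree_def by (metis append_assoc)
qed simp

lemma tree_root: "is_tree T \<Longrightarrow> T \<noteq> {} \<Longrightarrow> [] \<in> T"
  using tree_prefix_closed[of T "[]"] by auto

lemma finite_subtree: "finite T \<Longrightarrow> finite (subtree T [c])"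
  by (rule finite_imageD[of "Cons c"]) (auto simp: subtree_def intro: finite_subset)

lemma is_binary_tree_subtree:
  assumes "is_binary_tree T"
  shows "is_binary_tree (subtree T [c])"
  unfolding is_binary_tree_def
proof
  show "is_tree (subtree T [c])"
    using assms finite_subtree by (auto simp: is_binary_tree_def is_tree_def subtree_def)
  show "\<forall>p\<in>subtree T [c]. card (children (subtree T [c]) p) \<le> 2"
  proof
    fix p assume "p \<in> subtree T [c]"
    then have "card (children T (c # p)) \<le> 2"
      using assms by (auto simp: is_binary_tree_def subtree_def)
    moreover have "Cons c ` children (subtree T [c]) p = children T (c # p)"
      by (auto simp: children_def subtree_def)
    ultimately show "card (children (subtree T [c]) p) \<le> 2"
      by (metis card_image list.inject inj_onI)
  qed
qed

lemma card_tree_split_at_root: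
  assumes "finite T" "[] \<in> T" "finite C" and children: "\<And>c q. c # q \<in> T \<Longrightarrow> c \<in> C"
  shows "card T = Suc (\<Sum>c\<in>C. card (subtree T [c]))"
proof -
  define U where "U = (\<Union>c\<in>C. Cons c ` subtree T [c])"
  have "T = insert [] U"
  proof (intro equalityI subsetI)
    fix u assume "u \<in> T"
    then show "u \<in> insert [] U"
      using children by (cases u) (auto simp: U_def subtree_def)
  qed (use assms(2) in \<open>auto simp: U_def subtree_def\<close>)
  moreover have "finite (Cons c ` subtree T [c])" for c
    using assms(1) finite_subtree by blast
  moreover from this have "card U = (\<Sum>c\<in>C. card (Cons c ` subtree T [c]))"
    unfolding U_def using assms(3) by (intro card_UN_disjoint) auto
  moreover have "finite U" "[] \<notin> U"
    using assms(3) \<open>\<And>c. finite (Cons c ` subtree T [c])\<close> by (auto simp: U_def)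
  ultimately show ?thesis
    by (simp add: card_image)
qed

lemma subset_pair_if_card_le_2:
  fixes C :: "nat set"
  assumes "finite C" "card C \<le> 2"
  obtains a b where "a \<noteq> b" "C \<subseteq> {a, b}"
proof -
  obtain xs where xs: "set xs = C" "distinct xs" using finite_distinct_list[OF assms(1)] by blast
  then have "length xs \<le> 2" using assms(2) distinct_card by metis
  then consider "xs = []" | a where "xs = [a]" | a b where "xs = [a, b]"
    by (cases xs rule: remdups_adj.cases) auto
  then show thesis
    using that[of 0 1] that[of _ "Suc _"] that xs by cases auto
qed

lemma binary_tree_root_split:
  assumes "is_binary_tree T" "T \<noteq> {}"
  obtains c1 c2 where "c1 \<noteq> c2" "\<And>c q. c # q \<in> T \<Longrightarrow> c \<in> {c1, c2}"
    and "card T = Suc (card (subtree T [c1]) + card (subtree T [c2]))"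
    and "card (subtree T [c2]) \<le> card (subtree T [c1])"
proof -
  have "finite T" and root: "[] \<in> T"
    using assms tree_root by (auto simp: is_binary_tree_def is_tree_def)
  have inj: "inj_on (\<lambda>c. [c]) A" for A :: "nat set"
    by (simp add: inj_on_def)
  have root_children: "children T [] = (\<lambda>c. [c]) ` {c. [c] \<in> T}"
    by (auto simp: children_def)
  have "card (children T []) \<le> 2"
    using assms(1) root by (simp add: is_binary_tree_def)
  then have card2: "card {c. [c] \<in> T} \<le> 2"
    using root_children card_image[OF inj] by simp
  have "finite (children T [])"
    using \<open>finite T\<close> by (simp add: children_def)
  then have "finite {c. [c] \<in> T}"
    using root_children finite_image_iff[OF inj] by simp
  then obtain a b where "a \<noteq> b" "{c. [c] \<in> T} \<subseteq> {a, b}"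
    using card2 by (rule subset_pair_if_card_le_2)
  moreover have "[c] \<in> T" if "c # q \<in> T" for c q
    using tree_prefix_closed[of T "[c]" q] assms that by (simp add: is_binary_tree_def)
  ultimately have children: "\<And>c q. c # q \<in> T \<Longrightarrow> c \<in> {a, b}" by blast
  have "card T = Suc (card (subtree T [a]) + card (subtree T [b]))"
    using card_tree_split_at_root[OF \<open>finite T\<close> root _ children] \<open>a \<noteq> b\<close> by simp
  then show thesis
    using that[of a b] that[of b a] \<open>a \<noteq> b\<close> children
    by (cases "card (subtree T [b]) \<le> card (subtree T [a])") auto
qed

text \<open>absorbs L s: every sequence of demands of total size at most s, revealed one at a time,
  can be served in order at strictly increasing positions of L, a demand b at a position holding
  at least b.  A demand will be a light subtree together with the node it hangs from, a position
  the spine node carrying a copy of B_(L!i - 1).\<close>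

inductive absorbs :: "nat list \<Rightarrow> nat \<Rightarrow> bool" where
  "(\<And>b. 1 \<le> b \<Longrightarrow> b \<le> s \<Longrightarrow> \<exists>i<length L. b \<le> L ! i \<and> absorbs (drop (Suc i) L) (s - b))
   \<Longrightarrow> absorbs L s"

lemma absorbs_0: "absorbs L 0"
  by (rule absorbs.intros) auto

lemma absorbs_mono: "absorbs L s \<Longrightarrow> s' \<le> s \<Longrightarrow> absorbs L s'"
proof (induction arbitrary: s' rule: absorbs.induct)
  case (1 s L)
  show ?case
  proof (rule absorbs.intros)
    fix b assume "1 \<le> b" "b \<le> s'"
    with 1 obtain i where "i < length L" "b \<le> L ! i" "\<forall>x \<le> s - b. absorbs (drop (Suc i) L) x"
      by force
    with 1(2) show "\<exists>i<length L. b \<le> L ! i \<and> absorbs (drop (Suc i) L) (s' - b)"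
      by auto
  qed
qed

text \<open>Demands up to x are served in A; the first larger one by M, after which at most y is left
  for C.\<close>

lemma absorbs_append_Cons:
  "absorbs A x \<Longrightarrow> absorbs C y \<Longrightarrow> s \<le> M \<Longrightarrow> s \<le> x + 1 + y \<Longrightarrow> absorbs (A @ M # C) s"
proof (induction A x arbitrary: s rule: absorbs.induct)
  case (1 x A)
  show ?case
  proof (rule absorbs.intros)
    fix b assume b: "1 \<le> b" "b \<le> s"
    show "\<exists>i<length (A @ M # C).
      b \<le> (A @ M # C) ! i \<and> absorbs (drop (Suc i) (A @ M # C)) (s - b)"
    proof (cases "b \<le> x")
      case True
      with 1(1) b obtain i where i: "i < length A" "b \<le> A ! i"
        "\<And>s'. absorbs C y \<Longrightarrow> s' \<le> M \<Longrightarrow> s' \<le> x - b + 1 + y \<Longrightarrow>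
          absorbs (drop (Suc i) A @ M # C) s'"
        by blast
      have "absorbs (drop (Suc i) A @ M # C) (s - b)" using i(3) 1 b True by simp
      then show ?thesis using i(1,2) by (intro exI[of _ i]) (auto simp: nth_append)
    next
      case False
      have "absorbs C (s - b)" using absorbs_mono[OF 1(2)] 1(4) False by simp
      then show ?thesis using 1(3) b by (intro exI[of _ "length A"]) auto
    qed
  qed
qed

lemma aseq_eq: "1 \<le> N \<Longrightarrow> aseq N = aseq (N div 2) @ N # aseq (N div 2)"
  by (cases N rule: aseq.cases) auto

lemma absorbs_aseq: "absorbs (aseq N) N"
proof (induction N rule: less_induct)
  case (less N)
  show ?case
  proof (cases "N = 0")
    case True then show ?thesis by (simp add: absorbs_0)
  next
    case False
    then have "absorbs (aseq (N div 2)) (N div 2)" using less by simp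
    then have "absorbs (aseq (N div 2) @ N # aseq (N div 2)) N"
      using absorbs_append_Cons by fastforce
    then show ?thesis using aseq_eq False by simp
  qed
qed

lemma set_aseq: "x \<in> set (aseq N) \<Longrightarrow> 1 \<le> x \<and> x \<le> N"
proof (induction N rule: less_induct)
  case (less N)
  then have "N \<noteq> 0" by (cases "N = 0") auto
  then have "x \<in> set (aseq (N div 2)) \<or> x = N" using less.prems aseq_eq[of N] by auto
  then show ?case using less.IH[of "N div 2"] \<open>N \<noteq> 0\<close> by auto
qed

definition spine_seq :: "real \<Rightarrow> nat \<Rightarrow> nat list" where
  "spine_seq \<alpha> n = aseq (nat \<lfloor>(1 - \<alpha>) * real n\<rfloor>)"

declare Btree.simps [simp del]

lemma nat_floor_mult_less:
  assumes "0 < n" "c < 1"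
  shows "nat \<lfloor>c * real n\<rfloor> < n"
proof -
  have "c * real n < real n" using assms by simp
  then have "\<lfloor>c * real n\<rfloor> < int n" by linarith
  then show ?thesis using assms(1) by linarith
qed

lemma Btree_Suc_0 [simp]: "Btree \<alpha> (Suc 0) = {[]}"
  by (subst Btree.simps) simp

lemma spine_seq_nth_less:
  assumes "0 < n" "0 < \<alpha>" "i < length (spine_seq \<alpha> n)"
  shows "spine_seq \<alpha> n ! i < n"
proof -
  have "spine_seq \<alpha> n ! i \<in> set (aseq (nat \<lfloor>(1 - \<alpha>) * real n\<rfloor>))"
    using assms(3) by (simp add: spine_seq_def)
  then show ?thesis
    using set_aseq nat_floor_mult_less[of n "1 - \<alpha>"] assms(1,2) by fastforce
qed

text \<open>For 0 < alpha < 1 the guards in the definition of Btree never fire.\<close>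

lemma Btree_eq:
  assumes "2 \<le> n" "0 < \<alpha>" "\<alpha> < 1"
  defines "k \<equiv> length (spine_seq \<alpha> n)"
  shows "Btree \<alpha> n =
      {replicate i 0 | i. i \<le> k}
      \<union> (\<Union>i<k. (\<lambda>q. replicate i 0 @ 1 # q) ` Btree \<alpha> (spine_seq \<alpha> n ! i - 1))
      \<union> (\<lambda>q. replicate k 0 @ 1 # q) ` Btree \<alpha> (nat \<lfloor>\<alpha> * real n\<rfloor>)
      \<union> (\<lambda>q. replicate k 0 @ 2 # q) ` Btree \<alpha> ((n - 1) div 2)"
proof -
  have "spine_seq \<alpha> n ! i - 1 < n" if "i < k" for i
    using spine_seq_nth_less[of n \<alpha> i] assms that by simp
  moreover have "nat \<lfloor>\<alpha> * real n\<rfloor> < n" "(n - 1) div 2 < n"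
    using assms(1,3) nat_floor_mult_less[of n] by auto
  ultimately show ?thesis
    using assms(1) unfolding k_def spine_seq_def
    by (subst Btree.simps) (simp add: Let_def cong: SUP_cong_simp)
qed

context
  fixes \<alpha> :: real and n :: nat
  assumes n: "2 \<le> n" and \<alpha>: "0 < \<alpha>" "\<alpha> < 1"
begin

lemma spine_in_Btree: "i \<le> length (spine_seq \<alpha> n) \<Longrightarrow> replicate i 0 \<in> Btree \<alpha> n"
  by (subst Btree_eq[OF n \<alpha>]) blast

lemma Btree_hanging_subset:
  "i < length (spine_seq \<alpha> n) \<Longrightarrow>
    Btree \<alpha> (spine_seq \<alpha> n ! i - 1) \<subseteq> subtree (Btree \<alpha> n) (replicate i 0 @ [1])"
  by (subst Btree_eq[OF n \<alpha>]) (auto simp: subtree_def)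

lemma Btree_big_end_subset:
  "Btree \<alpha> (nat \<lfloor>\<alpha> * real n\<rfloor>) \<subseteq>
    subtree (Btree \<alpha> n) (replicate (length (spine_seq \<alpha> n)) 0 @ [1])"
  by (subst Btree_eq[OF n \<alpha>]) (auto simp: subtree_def)

lemma Btree_small_end_subset:
  "Btree \<alpha> ((n - 1) div 2) \<subseteq>
    subtree (Btree \<alpha> n) (replicate (length (spine_seq \<alpha> n)) 0 @ [2])"
  by (subst Btree_eq[OF n \<alpha>]) (auto simp: subtree_def)

end

lemma replicate_append_replicate: "replicate i x @ replicate j x @ xs = replicate (i + j) x @ xs"
  by (simp add: replicate_add)

text \<open>Invariant of the heavy path: what is still to be placed below spine node u_(i+1) has at
  most s + floor(alpha n) + 1 nodes, s being the demand budget left for the rest of the spine.\<close>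

lemma embeds_Btree_from_spine:
  assumes IH: "\<And>m T. m < n \<Longrightarrow> is_binary_tree T \<Longrightarrow> card T \<le> m \<Longrightarrow> embeds T (Btree \<alpha> m)"
    and n: "2 \<le> n" and \<alpha>: "0 < \<alpha>" "\<alpha> < 1"
  shows "is_binary_tree T \<Longrightarrow> card T \<le> n \<Longrightarrow> i \<le> length (spine_seq \<alpha> n) \<Longrightarrow>
    absorbs (drop i (spine_seq \<alpha> n)) s \<Longrightarrow> card T \<le> s + nat \<lfloor>\<alpha> * real n\<rfloor> + 1 \<Longrightarrow>
    embeds T (subtree (Btree \<alpha> n) (replicate i 0))"
proof (induction "card T" arbitrary: T i s rule: less_induct)
  case less
  define as where "as = spine_seq \<alpha> n"
  define k where "k = length as"
  define F where "F = nat \<lfloor>\<alpha> * real n\<rfloor>"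
  define S where "S = subtree (Btree \<alpha> n) (replicate i 0)"
  have subtree_S: "subtree S (replicate j 0 @ p) = subtree (Btree \<alpha> n) (replicate (i + j) 0 @ p)"
    for j p
    by (simp add: S_def replicate_append_replicate)
  have spine_S: "replicate j 0 \<in> S" if "i + j \<le> k" for j
    using spine_in_Btree[OF n \<alpha>, of "i + j"] that
    by (simp add: S_def subtree_def k_def as_def replicate_add)
  show ?case
  proof (cases "T = {}")
    case False
    with less.prems(1) obtain c1 c2 where c: "c1 \<noteq> c2" "\<And>c q. c # q \<in> T \<Longrightarrow> c \<in> {c1, c2}"
      and card_T: "card T = Suc (card (subtree T [c1]) + card (subtree T [c2]))"
      and heavy: "card (subtree T [c2]) \<le> card (subtree T [c1])"
      by (rule binary_tree_root_split) blast+
    have bin: "is_binary_tree (subtree T [c1])" "is_binary_tree (subtree T [c2])"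
      using less.prems(1) is_binary_tree_subtree by auto
    show ?thesis
    proof (cases "card (subtree T [c1]) \<le> F")
      case True
      text \<open>Root at the end of the spine, heavy child into the copy of B_F, light child into
        the copy of B_((n-1)/2).\<close>
      have "F < n"
        using nat_floor_mult_less \<alpha>(2) n by (simp add: F_def)
      then have "embeds (subtree T [c1]) (Btree \<alpha> F)"
        using IH bin(1) True by blast
      then have e1: "embeds (subtree T [c1]) (subtree S (replicate (k - i) 0 @ [1]))"
        using Btree_big_end_subset[OF n \<alpha>] less.prems(3)
        by (auto simp: subtree_S k_def as_def F_def intro: embeds_mono)
      have "card (subtree T [c2]) \<le> (n - 1) div 2"
        using card_T heavy less.prems(2) by linarith
      then have "embeds (subtree T [c2]) (Btree \<alpha> ((n - 1) div 2))"
        using IH[OF _ bin(2)] n by simp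
      then have e2: "embeds (subtree T [c2]) (subtree S (replicate (k - i) 0 @ [2]))"
        using Btree_small_end_subset[OF n \<alpha>] less.prems(3)
        by (auto simp: subtree_S k_def as_def intro: embeds_mono)
      have r: "replicate (k - i) 0 \<in> S"
        using spine_S less.prems(3) by (simp add: k_def as_def)
      show ?thesis
        unfolding S_def[symmetric] by (rule embeds_binary_node[OF r c(1) _ c(2) e1 e2]) simp
    next
      case False
      text \<open>Root at the spine node serving the demand of the light child plus the root; the
        heavy child continues down the spine with the remaining budget.\<close>
      define b where "b = Suc (card (subtree T [c2]))"
      have b: "1 \<le> b" "b \<le> s" using False card_T less.prems(5) unfolding b_def F_def by linarith+
      obtain j where j: "j < length (drop i as)" "b \<le> drop i as ! j"
        "absorbs (drop (Suc j) (drop i as)) (s - b)"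
        using less.prems(4) b unfolding as_def by (metis absorbs.cases)
      define i' where "i' = i + j"
      have i': "i' < k" "b \<le> as ! i'" "absorbs (drop (Suc i') as) (s - b)"
        using j less.prems(3) by (simp_all add: i'_def k_def as_def add.commute)
      have "embeds (subtree T [c1]) (subtree (Btree \<alpha> n) (replicate (Suc i') 0))"
        using less.hyps[OF _ bin(1) _ _ i'(3)[unfolded as_def]] card_T less.prems(2,5) b i'(1)
        by (simp add: b_def F_def k_def as_def)
      then have e1: "embeds (subtree T [c1]) (subtree S (replicate j 0 @ [0]))"
        unfolding subtree_S by (simp add: i'_def replicate_append_same)
      have "as ! i' - 1 < n"
        using spine_seq_nth_less[of n \<alpha> i'] n \<alpha> i'(1) by (simp add: k_def as_def)
      moreover have "card (subtree T [c2]) \<le> as ! i' - 1"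
        using i'(2) by (simp add: b_def)
      ultimately have "embeds (subtree T [c2]) (Btree \<alpha> (as ! i' - 1))"
        using IH bin(2) by blast
      then have e2: "embeds (subtree T [c2]) (subtree S (replicate j 0 @ [1]))"
        using Btree_hanging_subset[OF n \<alpha> i'(1)[unfolded k_def as_def]]
        by (auto simp: subtree_S i'_def as_def intro: embeds_mono)
      have r: "replicate j 0 \<in> S"
        using spine_S i'(1) by (simp add: i'_def)
      show ?thesis
        unfolding S_def[symmetric] by (rule embeds_binary_node[OF r c(1) _ c(2) e1 e2]) simp
    qed
  qed simp
qed

lemma le_nat_floor_add_nat_floor:
  assumes "0 \<le> \<alpha>" "\<alpha> \<le> 1"
  shows "n \<le> nat \<lfloor>(1 - \<alpha>) * real n\<rfloor> + nat \<lfloor>\<alpha> * real n\<rfloor> + 1"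
proof -
  have "(1 - \<alpha>) * real n + \<alpha> * real n = real n"
    by (simp add: algebra_simps)
  moreover have "0 \<le> (1 - \<alpha>) * real n" "0 \<le> \<alpha> * real n"
    using assms by simp_all
  ultimately show ?thesis by linarith
qed

lemma embeds_singleton: "embeds {[]} {[]}"
  by (auto simp: embeds_def nca_embedding_def intro: exI[of _ id])

theorem embeds_Btree:
  assumes "0 < \<alpha>" "\<alpha> < 1"
  shows "is_binary_tree T \<Longrightarrow> card T \<le> n \<Longrightarrow> embeds T (Btree \<alpha> n)"
proof (induction n arbitrary: T rule: less_induct)
  case (less n)
  show ?case
  proof (cases "2 \<le> n")
    case True
    have "absorbs (spine_seq \<alpha> n) (nat \<lfloor>(1 - \<alpha>) * real n\<rfloor>)"
      by (simp add: spine_seq_def absorbs_aseq)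
    moreover have "card T \<le> nat \<lfloor>(1 - \<alpha>) * real n\<rfloor> + nat \<lfloor>\<alpha> * real n\<rfloor> + 1"
      using le_nat_floor_add_nat_floor[of \<alpha> n] assms less.prems(2) by simp
    ultimately show ?thesis
      using embeds_Btree_from_spine[OF less.IH True assms, of T 0] less.prems by simp
  next
    case False
    show ?thesis
    proof (cases "T = {}")
      case False
      with less.prems have "[] \<in> T" "finite T" "card T \<le> 1"
        using \<open>\<not> 2 \<le> n\<close> tree_root by (auto simp: is_binary_tree_def is_tree_def)
      then have "T = {[]}" using card_le_Suc0_iff_eq[of T] by auto
      moreover from this have "n = 1" using less.prems(2) \<open>\<not> 2 \<le> n\<close> by simp
      ultimately show ?thesis using embeds_singleton by simp
    qed simp
  qed
qed

theorem lemma2: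
  fixes \<alpha> :: real and n :: nat and T :: "nat list set"
  assumes "1/2 < \<alpha>" and "\<alpha> < 1"
    and "is_binary_tree T" and "card T = n"
  shows "\<exists>f. inj_on f T \<and> f ` T \<subseteq> Btree \<alpha> n \<and>
             (\<forall>u\<in>T. \<forall>v\<in>T. f (nca u v) = nca (f u) (f v))"
proof -
  have "embeds T (Btree \<alpha> n)"
    using embeds_Btree[of \<alpha> T n] assms by simp
  then show ?thesis by (simp add: embeds_def nca_embedding_def)
qed

end
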